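(* Let $A\subseteq V$ and $O_A$ an operator on the physical sites of $A$. For $\lambda\in\mathbb C$ let $\mathcal Z^A_\lambda$ be the network for $\langle\psi|e^{\lambda O_A}|\psi\rangle$, expanded with the (fixed, $\lambda$-independent) BP messages of the norm network, with weights $Z_l(\lambda):=\tilde Z^{A,\lambda}_{E(l)}/Z^{A,\lambda}_{BP}$ for $l\in\mathcal L_A$. Assume that for $\lambda$ in a neighborhood of $0$, $Z^{A,\lambda}_{BP}\ne0$ and $\log\mathcal Z^A_\lambda=\log Z^{A,\lambda}_{BP}+\sum_{\mathbf W\text{ connected over }\mathcal L_A}\phi(\mathbf W)\prod_i Z_{l_i}(\lambda)^{\eta_i}$ holds with a series that may be differentiated term by term at $\lambda=0$. Then $$\langle O_A\rangle=\partial_\lambda\log\mathcal Z^A_\lambda\big|_{\lambda=0}=\langle O_A\rangle_{BP}+\sum_{\substack{\mathbf W\text{ connected over }\mathcal L_A\\ \mathrm{supp}(\mathbf W)\cap A\ne\emptyset}}\phi(\mathbf W)\sum_{l\in\mathbf W_A}\eta_l\Big[\bar Z^A_l\,Z_l^{\eta_l-1}\!\!\prod_{l'\in\mathbf W,\,l'\neq l}\!\!Z_{l'}^{\eta_{l'}}-Z_{\mathbf W}\langle O_A\rangle_{BP}\Big],$$ where $\mathbf W_A$ is the set of distinct elements of the cluster $\mathbf W$ whose support intersects $A$, $\eta_l$ is the multiplicity of $l$ in $\mathbf W$, and $Z_l^{0}:=1$.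
   Context: Let $|\psi\rangle$ be a PEPS on a finite graph $G=(V,E)$; $\mathcal Z=\langle\psi|\psi\rangle>0$ is the norm network (vertex tensors = ket tensor contracted with its conjugate over the physical index), and $\mathcal Z^A$ the network for $\langle\psi|O_A|\psi\rangle$ (operator inserted at the sites of $A$, same tensors elsewhere); $\langle O_A\rangle=\mathcal Z^A/\mathcal Z$. Fix a BP fixed point of $\mathcal Z$: messages $\mu_{v\to w}$ with $I_{vw}=\mu_{v\to w}\star\mu_{w\to v}\ne0$, such that each vertex tensor contracted with all incoming messages except from $w$ is proportional to $\mu_{v\to w}$; the same messages are used for all networks. $\mathcal P^\perp_{vw}=\mathbb 1-\mu_{v\to w}\otimes\mu_{w\to v}/I_{vw}$. For a network $\mathcal Y$ and $F\subseteq E$, the excitation contraction of $\mathcal Y$ on $F$ replaces the identity on edges in $F$ by $\mathcal P^\perp$ and on other edges by $\mu\otimes\mu/I$; write $\tilde Z_F,\tilde Z^A_F,\tilde Z^{A,\lambda}_F$ for $\mathcal Y=\mathcal Z,\mathcal Z^A,\mathcal Z^A_\lambda$, and $Z_{BP}=\tilde Z_\emptyset$ (nonzero), $Z^A_{BP}=\tilde Z^A_\emptyset$, $Z^{A,\lambda}_{BP}=\tilde Z^{A,\lambda}_\emptyset$, $\langle O_A\rangle_{BP}=Z^A_{BP}/Z_{BP}$. $\mathcal L_A$: connected subgraphs of $G$ with at least one edge in which every vertex outside $A$ has degree $\ge2$; $\mathrm{supp}(l)$ = vertex set. Weights: $Z_l:=\tilde Z_{E(l)}/Z_{BP}$ and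 $\bar Z^A_l:=\tilde Z^A_{E(l)}/Z_{BP}$ (normalized by the norm network's BP value). Compatible = vertex-disjoint. A cluster $\mathbf W=\{(l_i,\eta_i)\}$ is a finite multiset of distinct elements of $\mathcal L_A$ with multiplicities $\eta_i\ge1$, $Z_{\mathbf W}=\prod Z_{l_i}^{\eta_i}$, $\mathrm{supp}(\mathbf W)=\bigcup\mathrm{supp}(l_i)$; interaction graph: $\eta_i$ vertices per $l_i$, adjacent iff equal or incompatible; connected if it is connected. Ursell function $\phi(\mathbf W)=\frac1{\prod\eta_i!}\sum_C(-1)^{|E(C)|}$ over connected spanning subgraphs $C$ of the interaction graph. *)

theory Defs
  imports "HOL-Analysis.Analysis" "HOL-Library.Multiset"
begin

text \<open>The graph is G = (V,E) with vertex type 'v (linearly ordered, used only to orient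
  each edge e = {Min e, Max e}); edges are 2-element subsets of V.  D e is the bond
  dimension of edge e (virtual ket index ranges over {..<D e}), d v the physical dimension
  at v.  Ket tensors: Aten v s alpha, where s < d v is the physical index and alpha assigns
  to each edge incident to v a virtual index.\<close>

definition inc :: "'v set set \<Rightarrow> 'v \<Rightarrow> 'v set set" where
  "inc E v = {e \<in> E. v \<in> e}"

definition half_edges :: "'v set set \<Rightarrow> ('v \<times> 'v set) set" where
  "half_edges E = {(v, e). e \<in> E \<and> v \<in> e}"

definition bond_cfgs :: "'v set set \<Rightarrow> ('v set \<Rightarrow> nat) \<Rightarrow> 'v \<Rightarrow> ('v set \<Rightarrow> nat) set" where
  "bond_cfgs E D v = PiE (inc E v) (\<lambda>e. {..<D e})"

definition half_cfgs :: "'v set set \<Rightarrow> ('v set \<Rightarrow> nat) \<Rightarrow> ('v \<times> 'v set \<Rightarrow> nat) set" where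
  "half_cfgs E D = PiE (half_edges E) (\<lambda>(v, e). {..<D e})"

definition phys_cfgs :: "'v set \<Rightarrow> ('v \<Rightarrow> nat) \<Rightarrow> ('v \<Rightarrow> nat) set" where
  "phys_cfgs S d = PiE S (\<lambda>v. {..<d v})"

text \<open>Index space of an edge of the norm network (ket index, bra index).\<close>
definition edge_dom :: "('v set \<Rightarrow> nat) \<Rightarrow> 'v set \<Rightarrow> (nat \<times> nat) set" where
  "edge_dom D e = {..<D e} \<times> {..<D e}"

text \<open>An operator on the sites of S is a matrix X sigma' sigma = <sigma'|X|sigma>, indexed by
  physical configurations on S (elements of phys_cfgs S d).\<close>

definition op_id :: "('v \<Rightarrow> nat) \<Rightarrow> ('v \<Rightarrow> nat) \<Rightarrow> complex" where
  "op_id \<sigma>' \<sigma> = (if \<sigma>' = \<sigma> then 1 else 0)"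

definition op_mult ::
  "'v set \<Rightarrow> ('v \<Rightarrow> nat) \<Rightarrow> (('v \<Rightarrow> nat) \<Rightarrow> ('v \<Rightarrow> nat) \<Rightarrow> complex)
     \<Rightarrow> (('v \<Rightarrow> nat) \<Rightarrow> ('v \<Rightarrow> nat) \<Rightarrow> complex) \<Rightarrow> ('v \<Rightarrow> nat) \<Rightarrow> ('v \<Rightarrow> nat) \<Rightarrow> complex" where
  "op_mult S d P Q \<sigma>' \<sigma> = (\<Sum>\<tau>\<in>phys_cfgs S d. P \<sigma>' \<tau> * Q \<tau> \<sigma>)"

primrec op_pow ::
  "'v set \<Rightarrow> ('v \<Rightarrow> nat) \<Rightarrow> (('v \<Rightarrow> nat) \<Rightarrow> ('v \<Rightarrow> nat) \<Rightarrow> complex) \<Rightarrow> nat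
     \<Rightarrow> ('v \<Rightarrow> nat) \<Rightarrow> ('v \<Rightarrow> nat) \<Rightarrow> complex" where
  "op_pow S d P 0 = op_id"
| "op_pow S d P (Suc n) = op_mult S d (op_pow S d P n) P"

definition op_exp ::
  "'v set \<Rightarrow> ('v \<Rightarrow> nat) \<Rightarrow> complex \<Rightarrow> (('v \<Rightarrow> nat) \<Rightarrow> ('v \<Rightarrow> nat) \<Rightarrow> complex)
     \<Rightarrow> ('v \<Rightarrow> nat) \<Rightarrow> ('v \<Rightarrow> nat) \<Rightarrow> complex" where
  "op_exp S d lam P \<sigma>' \<sigma> = (\<Sum>n. lam ^ n / fact n * op_pow S d P n \<sigma>' \<sigma>)"

text \<open>S X M is the network <psi|X|psi> (X acting on the sites of S, identity
  elsewhere, i.e. ket and bra physical indices identified outside S), where the identity on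
  each edge e is replaced by the matrix M e; its first argument is the (ket,bra) index pair
  at the end Min e, its second the pair at the end Max e.\<close>

definition ident_mat :: "'v set \<Rightarrow> nat \<times> nat \<Rightarrow> nat \<times> nat \<Rightarrow> complex" where
  "ident_mat e i j = (if i = j then 1 else 0)"

definition contract ::
  "'v::linorder set \<Rightarrow> 'v set set \<Rightarrow> ('v set \<Rightarrow> nat) \<Rightarrow> ('v \<Rightarrow> nat)
    \<Rightarrow> ('v \<Rightarrow> nat \<Rightarrow> ('v set \<Rightarrow> nat) \<Rightarrow> complex)
    \<Rightarrow> 'v set \<Rightarrow> (('v \<Rightarrow> nat) \<Rightarrow> ('v \<Rightarrow> nat) \<Rightarrow> complex)
    \<Rightarrow> ('v set \<Rightarrow> nat \<times> nat \<Rightarrow> nat \<times> nat \<Rightarrow> complex) \<Rightarrow> complex" where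
  "contract V E D d Aten S X M =
     (\<Sum>a\<in>half_cfgs E D. \<Sum>b\<in>half_cfgs E D. \<Sum>s\<in>phys_cfgs V d. \<Sum>s'\<in>phys_cfgs V d.
        (\<Prod>v\<in>V. Aten v (s v) (restrict (\<lambda>e. a (v, e)) (inc E v))
                 * cnj (Aten v (s' v) (restrict (\<lambda>e. b (v, e)) (inc E v))))
      * (\<Prod>v\<in>V - S. if s v = s' v then 1 else 0)
      * X (restrict s' S) (restrict s S)
      * (\<Prod>e\<in>E. M e (a (Min e, e), b (Min e, e)) (a (Max e, e), b (Max e, e))))"

text \<open>The trivial operator on no sites (norm network).\<close>
definition one_op :: "('v \<Rightarrow> nat) \<Rightarrow> ('v \<Rightarrow> nat) \<Rightarrow> complex" where
  "one_op \<sigma>' \<sigma> = 1"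

text \<open>mu v w is the message mu_{v->w}, a vector on edge_dom D {v,w}.\<close>

definition Istar :: "('v set \<Rightarrow> nat) \<Rightarrow> ('v \<Rightarrow> 'v \<Rightarrow> nat \<times> nat \<Rightarrow> complex) \<Rightarrow> 'v \<Rightarrow> 'v \<Rightarrow> complex" where
  "Istar D \<mu> v w = (\<Sum>i\<in>edge_dom D {v, w}. \<mu> v w i * \<mu> w v i)"

definition Tnorm :: "('v \<Rightarrow> nat) \<Rightarrow> ('v \<Rightarrow> nat \<Rightarrow> ('v set \<Rightarrow> nat) \<Rightarrow> complex) \<Rightarrow> 'v
      \<Rightarrow> ('v set \<Rightarrow> nat) \<Rightarrow> ('v set \<Rightarrow> nat) \<Rightarrow> complex" where
  "Tnorm d Aten v \<alpha> \<beta> = (\<Sum>s<d v. Aten v s \<alpha> * cnj (Aten v s \<beta>))"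

definition BP_fixed_point ::
  "'v set \<Rightarrow> 'v set set \<Rightarrow> ('v set \<Rightarrow> nat) \<Rightarrow> ('v \<Rightarrow> nat)
    \<Rightarrow> ('v \<Rightarrow> nat \<Rightarrow> ('v set \<Rightarrow> nat) \<Rightarrow> complex) \<Rightarrow> ('v \<Rightarrow> 'v \<Rightarrow> nat \<times> nat \<Rightarrow> complex) \<Rightarrow> bool" where
  "BP_fixed_point V E D d Aten \<mu> \<longleftrightarrow>
     (\<forall>v\<in>V. \<forall>w. {v, w} \<in> E \<longrightarrow>
        (\<exists>c. \<forall>j\<in>edge_dom D {v, w}.
           (\<Sum>\<alpha>\<in>bond_cfgs E D v. \<Sum>\<beta>\<in>bond_cfgs E D v.
              if (\<alpha> {v, w}, \<beta> {v, w}) = j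
              then Tnorm d Aten v \<alpha> \<beta> *
                     (\<Prod>u\<in>{u. {u, v} \<in> E \<and> u \<noteq> w}. \<mu> u v (\<alpha> {u, v}, \<beta> {u, v}))
              else 0) = c * \<mu> v w j))"

text \<open>mu_{v->w} (x) mu_{w->v} / I_{vw} on the edge e, oriented so that the end Min e is
  fed the message coming from Max e and vice versa.\<close>
definition Pbp :: "('v::linorder set \<Rightarrow> nat) \<Rightarrow> ('v \<Rightarrow> 'v \<Rightarrow> nat \<times> nat \<Rightarrow> complex)
    \<Rightarrow> 'v set \<Rightarrow> nat \<times> nat \<Rightarrow> nat \<times> nat \<Rightarrow> complex" where
  "Pbp D \<mu> e i j = \<mu> (Max e) (Min e) i * \<mu> (Min e) (Max e) j / Istar D \<mu> (Min e) (Max e)"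

definition Pperp :: "('v::linorder set \<Rightarrow> nat) \<Rightarrow> ('v \<Rightarrow> 'v \<Rightarrow> nat \<times> nat \<Rightarrow> complex)
    \<Rightarrow> 'v set \<Rightarrow> nat \<times> nat \<Rightarrow> nat \<times> nat \<Rightarrow> complex" where
  "Pperp D \<mu> e i j = ident_mat e i j - Pbp D \<mu> e i j"

definition exc_mat :: "('v::linorder set \<Rightarrow> nat) \<Rightarrow> ('v \<Rightarrow> 'v \<Rightarrow> nat \<times> nat \<Rightarrow> complex)
    \<Rightarrow> 'v set set \<Rightarrow> 'v set \<Rightarrow> nat \<times> nat \<Rightarrow> nat \<times> nat \<Rightarrow> complex" where
  "exc_mat D \<mu> F e = (if e \<in> F then Pperp D \<mu> e else Pbp D \<mu> e)"

definition exc_contract where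
  "exc_contract V E D d Aten S X \<mu> F = contract V E D d Aten S X (exc_mat D \<mu> F)"

text \<open>An element of L_A is represented by its edge set (a connected subgraph with at least one
  edge has no isolated vertices, so it is determined by its edges); supp = vertex set.\<close>

definition supp :: "'v set set \<Rightarrow> 'v set" where
  "supp l = \<Union> l"

definition edge_connected :: "'v set set \<Rightarrow> bool" where
  "edge_connected l \<longleftrightarrow>
     (\<forall>x\<in>supp l. \<forall>y\<in>supp l. (x, y) \<in> ({(u, w). {u, w} \<in> l})\<^sup>*)"

definition LA :: "'v set set \<Rightarrow> 'v set \<Rightarrow> 'v set set set" where
  "LA E A = {l. l \<subseteq> E \<and> l \<noteq> {} \<and> edge_connected l \<and>
                (\<forall>v\<in>supp l - A. card {e\<in>l. v \<in> e} \<ge> 2)}"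

text \<open>Interaction graph of a cluster W (a multiset of loops): count W l copies of each l,
  copies adjacent iff they are distinct vertices and their loops are equal or incompatible
  (not vertex-disjoint).\<close>

definition ivert :: "'v set set multiset \<Rightarrow> ('v set set \<times> nat) set" where
  "ivert W = {(l, k). l \<in># W \<and> k < count W l}"

definition iadj :: "'v set set \<times> nat \<Rightarrow> 'v set set \<times> nat \<Rightarrow> bool" where
  "iadj x y \<longleftrightarrow> x \<noteq> y \<and> (fst x = fst y \<or> supp (fst x) \<inter> supp (fst y) \<noteq> {})"

definition iedges :: "'v set set multiset \<Rightarrow> ('v set set \<times> nat) set set" where
  "iedges W = {{x, y} | x y. x \<in> ivert W \<and> y \<in> ivert W \<and> iadj x y}"

definition graph_connected :: "'a set \<Rightarrow> 'a set set \<Rightarrow> bool" where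
  "graph_connected Vs C \<longleftrightarrow> (\<forall>x\<in>Vs. \<forall>y\<in>Vs. (x, y) \<in> ({(a, b). {a, b} \<in> C})\<^sup>*)"

definition ursell :: "'v set set multiset \<Rightarrow> real" where
  "ursell W = (1 / (\<Prod>l\<in>set_mset W. fact (count W l))) *
     (\<Sum>C\<in>{C. C \<subseteq> iedges W \<and> graph_connected (ivert W) C}. (-1) ^ card C)"

definition conn_clusters :: "'v set set \<Rightarrow> 'v set \<Rightarrow> 'v set set multiset set" where
  "conn_clusters E A = {W. W \<noteq> {#} \<and> set_mset W \<subseteq> LA E A \<and> graph_connected (ivert W) (iedges W)}"

definition cl_supp :: "'v set set multiset \<Rightarrow> 'v set" where
  "cl_supp W = (\<Union>l\<in>set_mset W. supp l)"


definition cl_weight :: "('v set set \<Rightarrow> complex) \<Rightarrow> 'v set set multiset \<Rightarrow> complex" where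
  "cl_weight w W = (\<Prod>l\<in>set_mset W. w l ^ count W l)"

definition Zl where
  "Zl V E D d Aten \<mu> l =
     exc_contract V E D d Aten {} one_op \<mu> l / exc_contract V E D d Aten {} one_op \<mu> {}"

definition Zbar where
  "Zbar V E D d Aten A Op \<mu> l =
     exc_contract V E D d Aten A Op \<mu> l / exc_contract V E D d Aten {} one_op \<mu> {}"

definition Zlam where
  "Zlam V E D d Aten A Op \<mu> lam l =
     exc_contract V E D d Aten A (op_exp A d lam Op) \<mu> l
       / exc_contract V E D d Aten A (op_exp A d lam Op) \<mu> {}"

end

theory Submission
  imports Defs
begin

text \<open>Inserting \<open>e\<^sup>\<lambda>\<^sup>O\<close> and differentiating at \<open>\<lambda> = 0\<close> turns every network into the corresponding
  network with \<open>O\<close> inserted; at \<open>\<lambda> = 0\<close> it is the norm network, a positive real, so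
  \<open>\<partial>\<^sub>\<lambda> log Z\<^sup>A\<^sub>\<lambda> = \<langle>O\<^sub>A\<rangle>\<close>. On the expansion side the derivative of \<open>Z\<^sub>l(\<lambda>)\<close> is
  \<open>bar Z\<^sup>A\<^sub>l - Z\<^sub>l \<langle>O\<^sub>A\<rangle>\<^sub>B\<^sub>P\<close>, and it vanishes for loops away from \<open>A\<close>: there every edge at \<open>A\<close> carries the
  rank-one BP projector, so each network splits into a part at \<open>A\<close> and a part away from it, and
  exchanging the far parts gives \<open>bar Z\<^sup>A\<^sub>l Z\<^sub>B\<^sub>P = Z\<^sub>l Z\<^sup>A\<^sub>B\<^sub>P\<close>. The product rule applied to the
  cluster weights, together with the assumed termwise differentiation, yields the sum; its value
  follows by differentiating \<open>Z\<^sup>A\<^sub>B\<^sub>P(\<lambda>) = exp (log Z\<^sup>A\<^sub>\<lambda> - \<Sigma>(\<lambda>))\<close>.\<close>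

section \<open>The operator exponential\<close>

lemma finite_phys_cfgs: "finite S \<Longrightarrow> finite (phys_cfgs S d)"
  unfolding phys_cfgs_def by (intro finite_PiE) auto

lemma restrict_in_phys_cfgs: "s \<in> phys_cfgs V d \<Longrightarrow> A \<subseteq> V \<Longrightarrow> restrict s A \<in> phys_cfgs A d"
  unfolding phys_cfgs_def by (auto simp: PiE_def Pi_def)

lemma op_pow_one:
  assumes "finite S" "\<sigma>' \<in> phys_cfgs S d"
  shows "op_pow S d X 1 \<sigma>' \<sigma> = X \<sigma>' \<sigma>"
proof -
  have "op_pow S d X 1 \<sigma>' \<sigma> = (\<Sum>\<tau>\<in>phys_cfgs S d. if \<sigma>' = \<tau> then X \<tau> \<sigma> else 0)"
    by (auto simp: op_mult_def op_id_def intro!: sum.cong)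
  also have "\<dots> = X \<sigma>' \<sigma>"
    using assms by (simp add: finite_phys_cfgs)
  finally show ?thesis .
qed

lemma op_pow_exponential_bound:
  assumes "finite S"
  obtains K where "\<And>n. cmod (op_pow S d X n \<sigma>' \<sigma>) \<le> K ^ n"
proof -
  define P where "P = phys_cfgs S d"
  have "finite P"
    using assms by (simp add: P_def finite_phys_cfgs)
  \<comment> \<open>The column \<open>\<sigma>\<close> need not be a configuration on \<open>S\<close>, so it is bounded separately.\<close>
  define K where "K = 1 + (\<Sum>\<rho>\<in>P. \<Sum>\<tau>\<in>insert \<sigma> P. cmod (X \<rho> \<tau>))"
  have "K \<ge> 1"
    unfolding K_def by (intro add_increasing2 sum_nonneg) auto
  have "\<forall>\<tau>\<in>insert \<sigma> P. cmod (op_pow S d X n \<sigma>' \<tau>) \<le> K ^ n" for n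
  proof (induction n)
    case 0
    then show ?case by (auto simp: op_id_def)
  next
    case (Suc n)
    show ?case
    proof
      fix \<tau> assume \<tau>: "\<tau> \<in> insert \<sigma> P"
      have "cmod (op_pow S d X (Suc n) \<sigma>' \<tau>) \<le> (\<Sum>\<rho>\<in>P. cmod (op_pow S d X n \<sigma>' \<rho>) * cmod (X \<rho> \<tau>))"
        unfolding op_pow.simps op_mult_def P_def[symmetric]
        by (rule order_trans[OF norm_sum]) (simp add: norm_mult)
      also have "\<dots> \<le> K ^ n * (\<Sum>\<rho>\<in>P. cmod (X \<rho> \<tau>))"
        unfolding sum_distrib_left using Suc.IH by (intro sum_mono mult_right_mono) auto
      also have "(\<Sum>\<rho>\<in>P. cmod (X \<rho> \<tau>)) \<le> K"
        unfolding K_def using \<tau> \<open>finite P\<close> by (intro add_increasing order_refl sum_mono member_le_sum) auto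
      then have "K ^ n * (\<Sum>\<rho>\<in>P. cmod (X \<rho> \<tau>)) \<le> K ^ Suc n"
        using \<open>K \<ge> 1\<close> by (simp add: mult_left_mono mult.commute)
      finally show "cmod (op_pow S d X (Suc n) \<sigma>' \<tau>) \<le> K ^ Suc n" .
    qed
  qed
  then show ?thesis
    using that by blast
qed

lemma op_exp_eq_powser: "op_exp S d lam X \<sigma>' \<sigma> = (\<Sum>n. op_pow S d X n \<sigma>' \<sigma> / fact n * lam ^ n)"
  unfolding op_exp_def by (intro suminf_cong) simp

lemma op_exp_0: "op_exp S d 0 X = op_id"
  by (intro ext) (simp only: op_exp_eq_powser powser_zero, simp)

lemma op_exp_has_field_derivative_0:
  assumes "finite S" "\<sigma>' \<in> phys_cfgs S d"
  shows "((\<lambda>lam. op_exp S d lam X \<sigma>' \<sigma>) has_field_derivative X \<sigma>' \<sigma>) (at 0)"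
proof -
  define c where "c n = op_pow S d X n \<sigma>' \<sigma> / fact n" for n
  obtain K where K: "\<And>n. cmod (op_pow S d X n \<sigma>' \<sigma>) \<le> K ^ n"
    using op_pow_exponential_bound[OF assms(1)] by metis
  have "summable (\<lambda>n. c n * y ^ n)" for y
  proof (rule summable_comparison_test')
    show "summable (\<lambda>n. inverse (fact n) * (K * cmod y) ^ n)"
      by (rule summable_exp)
    show "norm (c n * y ^ n) \<le> inverse (fact n) * (K * cmod y) ^ n" for n
      unfolding c_def using K[of n]
      by (auto simp: norm_mult norm_divide norm_power power_mult_distrib divide_simps
               intro!: mult_right_mono)
  qed
  then have "((\<lambda>y. \<Sum>n. c n * y ^ n) has_field_derivative (\<Sum>n. diffs c n * 0 ^ n)) (at 0)"
    by (rule termdiffs_strong_converges_everywhere)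
  moreover have "(\<Sum>n. diffs c n * 0 ^ n) = X \<sigma>' \<sigma>"
    using op_pow_one[OF assms] by (simp add: diffs_def c_def)
  ultimately show ?thesis
    by (simp add: op_exp_eq_powser c_def)
qed

lemma prod_indicator:
  "finite S \<Longrightarrow> (\<Prod>v\<in>S. if P v then 1 else 0) = (if \<forall>v\<in>S. P v then 1 else (0::'a::comm_semiring_1))"
  by (induction S rule: finite_induct) auto

lemma contract_op_exp_has_field_derivative_0:
  assumes "finite V" "A \<subseteq> V"
  shows "((\<lambda>lam. contract V E D d Aten A (op_exp A d lam X) M) has_field_derivative
           contract V E D d Aten A X M) (at 0)"
proof -
  have "finite A"
    using assms finite_subset by blast
  then show ?thesis
    unfolding contract_def
    by (intro DERIV_sum DERIV_cmult_right DERIV_cmult op_exp_has_field_derivative_0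
        restrict_in_phys_cfgs) (use assms in auto)
qed

lemma contract_op_exp_0:
  assumes "finite V" "A \<subseteq> V"
  shows "contract V E D d Aten A (op_exp A d 0 X) M = contract V E D d Aten {} one_op M"
proof -
  have diag: "c * (\<Prod>v\<in>V - A. if s v = s' v then 1 else 0) * op_id (restrict s' A) (restrict s A)
      = c * (\<Prod>v\<in>V. if s v = s' v then 1 else 0)" for c :: complex and s s' :: "'a \<Rightarrow> nat"
  proof -
    have "op_id (restrict s' A) (restrict s A) = (if \<forall>v\<in>A. s v = s' v then 1 else 0)"
      unfolding op_id_def by (auto simp: restrict_def fun_eq_iff) metis
    then show ?thesis
      using assms by (simp add: prod_indicator) blast
  qed
  show ?thesis
    unfolding contract_def op_exp_0 one_op_def by (simp add: diag)
qed

lemma norm_network_nonneg: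
  assumes "finite V"
  shows "contract V E D d Aten {} one_op ident_mat \<in> \<real>\<^sub>\<ge>\<^sub>0"
proof -
  define H where "H = half_cfgs E D"
  define P where "P = phys_cfgs V d"
  define \<psi> where "\<psi> a s = (\<Prod>v\<in>V. Aten v (s v) (restrict (\<lambda>e. a (v, e)) (inc E v))) *
      (\<Prod>e\<in>E. if a (Min e, e) = a (Max e, e) then (1::complex) else 0)" for a s
  have summand: "(\<Prod>v\<in>V. Aten v (s v) (restrict (\<lambda>e. a (v, e)) (inc E v))
                 * cnj (Aten v (s' v) (restrict (\<lambda>e. b (v, e)) (inc E v))))
      * (\<Prod>v\<in>V - {}. if s v = s' v then 1 else 0)
      * one_op (restrict s' {}) (restrict s {})
      * (\<Prod>e\<in>E. ident_mat e (a (Min e, e), b (Min e, e)) (a (Max e, e), b (Max e, e)))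
      = (if s' = s then \<psi> a s * cnj (\<psi> b s) else 0)" if "s \<in> P" "s' \<in> P" for a b s s'
  proof -
    have "(\<forall>v\<in>V. s v = s' v) \<longleftrightarrow> s' = s"
      using that unfolding P_def phys_cfgs_def by (auto simp: PiE_def extensional_def fun_eq_iff) metis
    moreover have "(\<Prod>e\<in>E. ident_mat e (a (Min e, e), b (Min e, e)) (a (Max e, e), b (Max e, e)))
       = (\<Prod>e\<in>E. if a (Min e, e) = a (Max e, e) then (1::complex) else 0) *
         cnj (\<Prod>e\<in>E. if b (Min e, e) = b (Max e, e) then (1::complex) else 0)"
      by (simp add: prod.distrib[symmetric] ident_mat_def cnj_prod, intro prod.cong) auto
    ultimately show ?thesis
      using assms by (simp add: prod.distrib prod_indicator one_op_def \<psi>_def)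
  qed
  have "contract V E D d Aten {} one_op ident_mat
      = (\<Sum>a\<in>H. \<Sum>b\<in>H. \<Sum>s\<in>P. \<Sum>s'\<in>P. if s' = s then \<psi> a s * cnj (\<psi> b s) else 0)"
    unfolding contract_def H_def[symmetric] P_def[symmetric]
    by (intro sum.cong refl summand)
  also have "\<dots> = (\<Sum>a\<in>H. \<Sum>b\<in>H. \<Sum>s\<in>P. \<psi> a s * cnj (\<psi> b s))"
    using assms by (simp add: P_def finite_phys_cfgs)
  also have "\<dots> = (\<Sum>s\<in>P. (\<Sum>a\<in>H. \<psi> a s) * cnj (\<Sum>b\<in>H. \<psi> b s))"
    by (simp add: sum_distrib_left sum_distrib_right sum.swap[of _ P],
        subst sum.swap[of _ H], simp)
  also have "\<dots> = of_real (\<Sum>s\<in>P. (cmod (\<Sum>a\<in>H. \<psi> a s))\<^sup>2)"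
    by (simp only: of_real_sum complex_norm_square)
  finally show ?thesis
    by (simp only: nonneg_Reals_of_real_iff) (intro sum_nonneg zero_le_power2)
qed

lemma Ln_contract_op_exp_has_field_derivative_0:
  assumes "finite V" "A \<subseteq> V" "contract V E D d Aten {} one_op ident_mat \<noteq> 0"
  shows "((\<lambda>lam. Ln (contract V E D d Aten A (op_exp A d lam X) ident_mat)) has_field_derivative
           contract V E D d Aten A X ident_mat / contract V E D d Aten {} one_op ident_mat) (at 0)"
proof -
  let ?Z = "contract V E D d Aten {} one_op ident_mat"
  have "?Z \<notin> \<real>\<^sub>\<le>\<^sub>0"
    using norm_network_nonneg[OF assms(1), of E D d Aten] assms(3)
    by (auto simp: complex_nonneg_Reals_iff complex_nonpos_Reals_iff complex_eq_iff)
  then have "(Ln has_field_derivative inverse ?Z) (at (contract V E D d Aten A (op_exp A d 0 X) ident_mat))"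
    unfolding contract_op_exp_0[OF assms(1,2)] by (rule has_field_derivative_Ln)
  from DERIV_chain2[OF this contract_op_exp_has_field_derivative_0[OF assms(1,2)]]
  show ?thesis
    by (simp add: field_simps)
qed

section \<open>Decoupling of the region \<open>A\<close>\<close>

lemma sum_mult_sum_exchange_by_involution:
  fixes P1 P2 Q1 Q2 :: "'z \<Rightarrow> 'a::comm_semiring_1"
  assumes mix_in: "\<And>z w. z \<in> \<Omega> \<Longrightarrow> w \<in> \<Omega> \<Longrightarrow> mix z w \<in> \<Omega>"
    and mix_invol: "\<And>z w. z \<in> \<Omega> \<Longrightarrow> w \<in> \<Omega> \<Longrightarrow> mix (mix z w) (mix w z) = z"
    and P1: "\<And>z w. z \<in> \<Omega> \<Longrightarrow> w \<in> \<Omega> \<Longrightarrow> P1 (mix z w) = P1 z"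
    and P2: "\<And>z w. z \<in> \<Omega> \<Longrightarrow> w \<in> \<Omega> \<Longrightarrow> P2 (mix z w) = P2 z"
    and Q1: "\<And>z w. z \<in> \<Omega> \<Longrightarrow> w \<in> \<Omega> \<Longrightarrow> Q1 (mix z w) = Q1 w"
    and Q2: "\<And>z w. z \<in> \<Omega> \<Longrightarrow> w \<in> \<Omega> \<Longrightarrow> Q2 (mix z w) = Q2 w"
  shows "(\<Sum>z\<in>\<Omega>. P1 z * Q1 z) * (\<Sum>w\<in>\<Omega>. P2 w * Q2 w)
       = (\<Sum>z\<in>\<Omega>. P1 z * Q2 z) * (\<Sum>w\<in>\<Omega>. P2 w * Q1 w)"
proof -
  define \<sigma> where "\<sigma> = (\<lambda>(z, w). (mix z w, mix w z))"
  have bij: "bij_betw \<sigma> (\<Omega> \<times> \<Omega>) (\<Omega> \<times> \<Omega>)"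
    by (rule bij_betwI[where g = \<sigma>]) (auto simp: \<sigma>_def mix_in mix_invol)
  have "(\<Sum>z\<in>\<Omega>. P1 z * Q2 z) * (\<Sum>w\<in>\<Omega>. P2 w * Q1 w)
      = (\<Sum>(z, w)\<in>\<Omega> \<times> \<Omega>. P1 z * Q2 z * (P2 w * Q1 w))"
    by (simp add: sum_product sum.cartesian_product)
  also have "\<dots> = (\<Sum>x\<in>\<Omega> \<times> \<Omega>. (\<lambda>(z, w). P1 z * Q2 z * (P2 w * Q1 w)) (\<sigma> x))"
    by (rule sum.reindex_bij_betw[OF bij, symmetric])
  also have "\<dots> = (\<Sum>(z, w)\<in>\<Omega> \<times> \<Omega>. P1 z * Q1 z * (P2 w * Q2 w))"
    by (intro sum.cong refl) (auto simp: \<sigma>_def P1 P2 Q1 Q2 mult_ac)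
  also have "\<dots> = (\<Sum>z\<in>\<Omega>. P1 z * Q1 z) * (\<Sum>w\<in>\<Omega>. P2 w * Q2 w)"
    by (simp add: sum_product sum.cartesian_product)
  finally show ?thesis by simp
qed

lemma card_2_eq_Min_Max:
  assumes "card (e::'v::linorder set) = 2"
  shows "e = {Min e, Max e}" "Min e \<noteq> Max e"
proof -
  obtain x y where xy: "x \<noteq> y" "e = {x, y}"
    using assms unfolding card_2_iff by blast
  have m: "Min e = min x y" "Max e = max x y"
    unfolding xy(2) by simp_all
  show "e = {Min e, Max e}" "Min e \<noteq> Max e"
    unfolding m using xy by (cases "x \<le> y"; simp add: min_def max_def insert_commute)+
qed

definition contract_term where
  "contract_term V E d Aten S X M = (\<lambda>(a, b, s, s').
        (\<Prod>v\<in>V. Aten v (s v) (restrict (\<lambda>e. a (v, e)) (inc E v))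
                 * cnj (Aten v (s' v) (restrict (\<lambda>e. b (v, e)) (inc E v))))
      * (\<Prod>v\<in>V - S. if s v = s' v then 1 else 0)
      * X (restrict s' S) (restrict s S)
      * (\<Prod>e\<in>E. M e (a (Min e, e), b (Min e, e)) (a (Max e, e), b (Max e, e))))"

lemma contract_eq_sum_contract_term:
  "contract V E D d Aten S X M =
     (\<Sum>z\<in>half_cfgs E D \<times> half_cfgs E D \<times> phys_cfgs V d \<times> phys_cfgs V d. contract_term V E d Aten S X M z)"
  unfolding contract_def contract_term_def by (simp add: sum.cartesian_product)

definition vertex_weight where
  "vertex_weight E Aten v a b s s' = Aten v (s v) (restrict (\<lambda>e. a (v, e)) (inc E v))
                 * cnj (Aten v (s' v) (restrict (\<lambda>e. b (v, e)) (inc E v)))"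

definition other_end :: "'v::linorder \<Rightarrow> 'v set \<Rightarrow> 'v" where
  "other_end v e = (if v = Min e then Max e else Min e)"

definition incoming_msg where
  "incoming_msg \<mu> a b v e = \<mu> (other_end v e) v (a (v, e), b (v, e))"

text \<open>On an edge meeting \<open>A\<close> the BP projector is the product of the incoming messages at its two
  ends, divided by \<open>I\<close>. This splits each term of a contraction into a part attached to \<open>A\<close> and a
  part attached to its complement.\<close>

definition near_part where
  "near_part E Aten \<mu> A S X = (\<lambda>(a, b, s, s').
     (\<Prod>v\<in>A. vertex_weight E Aten v a b s s') * (\<Prod>v\<in>A - S. if s v = s' v then 1 else 0)
     * X (restrict s' S) (restrict s S)
     * (\<Prod>e\<in>{e\<in>E. e \<inter> A \<noteq> {}}. \<Prod>v\<in>e \<inter> A. incoming_msg \<mu> a b v e))"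

definition far_part where
  "far_part V E D Aten \<mu> A M = (\<lambda>(a, b, s, s').
     (\<Prod>v\<in>V - A. vertex_weight E Aten v a b s s') * (\<Prod>v\<in>V - A. if s v = s' v then 1 else 0)
     * (\<Prod>e\<in>{e\<in>E. e \<inter> A \<noteq> {}}. (\<Prod>v\<in>e - A. incoming_msg \<mu> a b v e) / Istar D \<mu> (Min e) (Max e))
     * (\<Prod>e\<in>{e\<in>E. e \<inter> A = {}}. M e (a (Min e, e), b (Min e, e)) (a (Max e, e), b (Max e, e))))"

lemma Pbp_eq_prod_incoming_msg:
  assumes "card e = 2"
  shows "Pbp D \<mu> e (a (Min e, e), b (Min e, e)) (a (Max e, e), b (Max e, e))
       = (\<Prod>v\<in>e. incoming_msg \<mu> a b v e) / Istar D \<mu> (Min e) (Max e)"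
proof -
  have "(\<Prod>v\<in>e. incoming_msg \<mu> a b v e) = incoming_msg \<mu> a b (Min e) e * incoming_msg \<mu> a b (Max e) e"
    by (subst card_2_eq_Min_Max(1)[OF assms]) (simp add: card_2_eq_Min_Max(2)[OF assms])
  then show ?thesis
    using card_2_eq_Min_Max(2)[OF assms] by (simp add: Pbp_def incoming_msg_def other_end_def)
qed

lemma contract_term_factorization:
  assumes finV: "finite V" and graph: "\<forall>e\<in>E. e \<subseteq> V \<and> card e = 2"
    and SA: "S \<subseteq> A" and AV: "A \<subseteq> V"
    and M: "\<forall>e\<in>E. e \<inter> A \<noteq> {} \<longrightarrow> M e = Pbp D \<mu> e"
  shows "contract_term V E d Aten S X M z = near_part E Aten \<mu> A S X z * far_part V E D Aten \<mu> A M z"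
proof -
  obtain a b s s' where z: "z = (a, b, s, s')"
    by (cases z) auto
  have finE: "finite E"
    using graph finV by (meson Pow_iff finite_Pow_iff rev_finite_subset subsetI)
  define E1 where "E1 = {e\<in>E. e \<inter> A \<noteq> {}}"
  define E0 where "E0 = {e\<in>E. e \<inter> A = {}}"
  let ?m = "\<lambda>e. M e (a (Min e, e), b (Min e, e)) (a (Max e, e), b (Max e, e))"
  let ?\<delta> = "\<lambda>v. if s v = s' v then 1 else (0::complex)"
  have split_V: "(\<Prod>v\<in>V. vertex_weight E Aten v a b s s')
      = (\<Prod>v\<in>A. vertex_weight E Aten v a b s s') * (\<Prod>v\<in>V - A. vertex_weight E Aten v a b s s')"
    using prod.subset_diff[OF AV finV] by (simp add: mult.commute)
  have split_V_S: "(\<Prod>v\<in>V - S. ?\<delta> v) = (\<Prod>v\<in>A - S. ?\<delta> v) * (\<Prod>v\<in>V - A. ?\<delta> v)"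
  proof -
    have "(V - S) - (V - A) = A - S"
      using AV by blast
    then show ?thesis
      using prod.subset_diff[of "V - A" "V - S" ?\<delta>] SA finV by auto
  qed
  have split_E: "(\<Prod>e\<in>E. ?m e) = (\<Prod>e\<in>E1. ?m e) * (\<Prod>e\<in>E0. ?m e)"
  proof -
    have "E0 \<subseteq> E" "E - E0 = E1"
      by (auto simp: E0_def E1_def)
    with prod.subset_diff[OF this(1) finE] show ?thesis
      by simp
  qed
  have split_e: "?m e = (\<Prod>v\<in>e \<inter> A. incoming_msg \<mu> a b v e)
      * ((\<Prod>v\<in>e - A. incoming_msg \<mu> a b v e) / Istar D \<mu> (Min e) (Max e))"
    if "e \<in> E1" for e
  proof -
    have "e \<in> E" "card e = 2"
      using that graph by (auto simp: E1_def)
    then have "finite e"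
      by (metis card.infinite zero_neq_numeral)
    have "?m e = (\<Prod>v\<in>e. incoming_msg \<mu> a b v e) / Istar D \<mu> (Min e) (Max e)"
      using M that \<open>e \<in> E\<close> by (simp add: E1_def Pbp_eq_prod_incoming_msg \<open>card e = 2\<close>)
    then show ?thesis
      by (simp add: prod.Int_Diff[OF \<open>finite e\<close>, of _ A])
  qed
  have split_E1: "(\<Prod>e\<in>E1. ?m e) = (\<Prod>e\<in>E1. \<Prod>v\<in>e \<inter> A. incoming_msg \<mu> a b v e)
      * (\<Prod>e\<in>E1. (\<Prod>v\<in>e - A. incoming_msg \<mu> a b v e) / Istar D \<mu> (Min e) (Max e))"
    by (simp only: prod.distrib[symmetric] split_e cong: prod.cong)
  show ?thesis
    unfolding z contract_term_def vertex_weight_def[symmetric] near_part_def far_part_def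
      E1_def[symmetric] E0_def[symmetric] prod.case split_V split_V_S split_E split_E1
    by (simp add: mult_ac)
qed

text \<open>\<open>splice_cfg A z w\<close> agrees with \<open>z\<close> at the sites and half-edges of \<open>A\<close> and with \<open>w\<close> elsewhere, so
  \<open>(z, w) \<mapsto> (splice_cfg A z w, splice_cfg A w z)\<close> is an involution exchanging the far parts.\<close>

definition splice_half :: "'v set \<Rightarrow> ('v \<times> 'v set \<Rightarrow> nat) \<Rightarrow> ('v \<times> 'v set \<Rightarrow> nat) \<Rightarrow> 'v \<times> 'v set \<Rightarrow> nat" where
  "splice_half A a a2 = (\<lambda>(v, e). if v \<in> A then a (v, e) else a2 (v, e))"

definition splice_phys :: "'v set \<Rightarrow> ('v \<Rightarrow> nat) \<Rightarrow> ('v \<Rightarrow> nat) \<Rightarrow> 'v \<Rightarrow> nat" where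
  "splice_phys A s t = (\<lambda>v. if v \<in> A then s v else t v)"

definition splice_cfg where
  "splice_cfg A z w = (case z of (a, b, s, s') \<Rightarrow> case w of (a2, b2, t, t') \<Rightarrow>
      (splice_half A a a2, splice_half A b b2, splice_phys A s t, splice_phys A s' t'))"

lemma splice_cfg_simp:
  "splice_cfg A (a, b, s, s') (a2, b2, t, t')
     = (splice_half A a a2, splice_half A b b2, splice_phys A s t, splice_phys A s' t')"
  by (simp add: splice_cfg_def)

lemma splice_cfg_involution: "splice_cfg A (splice_cfg A z w) (splice_cfg A w z) = z"
  by (cases z; cases w) (auto simp: splice_cfg_simp splice_half_def splice_phys_def fun_eq_iff)

lemma splice_cfg_in:
  assumes "z \<in> half_cfgs E D \<times> half_cfgs E D \<times> phys_cfgs V d \<times> phys_cfgs V d"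
    and "w \<in> half_cfgs E D \<times> half_cfgs E D \<times> phys_cfgs V d \<times> phys_cfgs V d"
  shows "splice_cfg A z w \<in> half_cfgs E D \<times> half_cfgs E D \<times> phys_cfgs V d \<times> phys_cfgs V d"
  using assms
  by (cases z; cases w)
     (auto simp: splice_cfg_simp half_cfgs_def phys_cfgs_def splice_half_def splice_phys_def
        PiE_iff extensional_def)

lemma near_part_splice:
  assumes "S \<subseteq> A"
  shows "near_part E Aten \<mu> A S X (splice_cfg A z w) = near_part E Aten \<mu> A S X z"
proof -
  obtain a b s s' where z: "z = (a, b, s, s')"
    by (cases z) auto
  obtain a2 b2 t t' where w: "w = (a2, b2, t, t')"
    by (cases w) auto
  have "restrict (splice_phys A s t) S = restrict s S" "restrict (splice_phys A s' t') S = restrict s' S"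
    using assms by (auto simp: restrict_def splice_phys_def fun_eq_iff)
  moreover have "vertex_weight E Aten v (splice_half A a a2) (splice_half A b b2)
      (splice_phys A s t) (splice_phys A s' t') = vertex_weight E Aten v a b s s'" if "v \<in> A" for v
    using that by (simp add: vertex_weight_def splice_half_def splice_phys_def restrict_def)
  moreover have "incoming_msg \<mu> (splice_half A a a2) (splice_half A b b2) v e = incoming_msg \<mu> a b v e"
    if "v \<in> A" for v e
    using that by (simp add: incoming_msg_def splice_half_def)
  ultimately show ?thesis
    unfolding z w splice_cfg_simp near_part_def prod.case
    by (intro arg_cong2[where f = "(*)"] prod.cong refl) (auto simp: splice_phys_def)
qed

lemma far_part_splice:
  assumes graph: "\<forall>e\<in>E. e \<subseteq> V \<and> card e = 2"
  shows "far_part V E D Aten \<mu> A M (splice_cfg A z w) = far_part V E D Aten \<mu> A M w"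
proof -
  obtain a b s s' where z: "z = (a, b, s, s')"
    by (cases z) auto
  obtain a2 b2 t t' where w: "w = (a2, b2, t, t')"
    by (cases w) auto
  have "vertex_weight E Aten v (splice_half A a a2) (splice_half A b b2)
      (splice_phys A s t) (splice_phys A s' t') = vertex_weight E Aten v a2 b2 t t'" if "v \<notin> A" for v
    using that by (simp add: vertex_weight_def splice_half_def splice_phys_def restrict_def)
  moreover have "incoming_msg \<mu> (splice_half A a a2) (splice_half A b b2) v e = incoming_msg \<mu> a2 b2 v e"
    if "v \<notin> A" for v e
    using that by (simp add: incoming_msg_def splice_half_def)
  moreover have "Min e \<notin> A \<and> Max e \<notin> A" if "e \<in> E" "e \<inter> A = {}" for e
    using that graph card_2_eq_Min_Max(1)[of e] by blast
  ultimately show ?thesis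
    unfolding z w splice_cfg_simp far_part_def prod.case
    by (intro arg_cong2[where f = "(*)"] arg_cong2[where f = "(/)"] prod.cong refl)
       (auto simp: splice_phys_def splice_half_def)
qed

lemma contract_exchange_far_parts:
  assumes finV: "finite V" and graph: "\<forall>e\<in>E. e \<subseteq> V \<and> card e = 2"
    and "S1 \<subseteq> A" "S2 \<subseteq> A" "A \<subseteq> V"
    and "\<forall>e\<in>E. e \<inter> A \<noteq> {} \<longrightarrow> M1 e = Pbp D \<mu> e"
    and "\<forall>e\<in>E. e \<inter> A \<noteq> {} \<longrightarrow> M2 e = Pbp D \<mu> e"
  shows "contract V E D d Aten S1 X1 M1 * contract V E D d Aten S2 X2 M2
       = contract V E D d Aten S1 X1 M2 * contract V E D d Aten S2 X2 M1"
proof -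
  define \<Omega> where "\<Omega> = half_cfgs E D \<times> half_cfgs E D \<times> phys_cfgs V d \<times> phys_cfgs V d"
  have factored: "contract V E D d Aten S X M
      = (\<Sum>z\<in>\<Omega>. near_part E Aten \<mu> A S X z * far_part V E D Aten \<mu> A M z)"
    if "S \<subseteq> A" "\<forall>e\<in>E. e \<inter> A \<noteq> {} \<longrightarrow> M e = Pbp D \<mu> e" for S X M
    unfolding contract_eq_sum_contract_term \<Omega>_def[symmetric]
    by (intro sum.cong refl contract_term_factorization[OF finV graph that(1) \<open>A \<subseteq> V\<close> that(2)])
  show ?thesis
    unfolding factored[OF assms(3,6)] factored[OF assms(4,7)] factored[OF assms(3,7)] factored[OF assms(4,6)]
    by (rule sum_mult_sum_exchange_by_involution[where mix = "splice_cfg A"])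
       (auto simp: \<Omega>_def splice_cfg_involution near_part_splice assms(3,4) far_part_splice[OF graph]
         intro: splice_cfg_in)
qed

definition expect_BP where
  "expect_BP V E D d Aten A X \<mu> =
     exc_contract V E D d Aten A X \<mu> {} / exc_contract V E D d Aten {} one_op \<mu> {}"

lemma Zlam_0:
  assumes "finite V" "A \<subseteq> V"
  shows "Zlam V E D d Aten A X \<mu> 0 l = Zl V E D d Aten \<mu> l"
  unfolding Zlam_def Zl_def exc_contract_def contract_op_exp_0[OF assms] ..

lemma Zlam_has_field_derivative_0:
  assumes "finite V" "A \<subseteq> V" "exc_contract V E D d Aten {} one_op \<mu> {} \<noteq> 0"
  shows "((\<lambda>lam. Zlam V E D d Aten A X \<mu> lam l) has_field_derivative
           Zbar V E D d Aten A X \<mu> l - Zl V E D d Aten \<mu> l * expect_BP V E D d Aten A X \<mu>) (at 0)"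
proof -
  have dN: "((\<lambda>lam. exc_contract V E D d Aten A (op_exp A d lam X) \<mu> F) has_field_derivative
          exc_contract V E D d Aten A X \<mu> F) (at 0)" for F
    unfolding exc_contract_def by (rule contract_op_exp_has_field_derivative_0[OF assms(1,2)])
  have N0: "exc_contract V E D d Aten A (op_exp A d 0 X) \<mu> F = exc_contract V E D d Aten {} one_op \<mu> F"
    for F
    unfolding exc_contract_def by (rule contract_op_exp_0[OF assms(1,2)])
  from DERIV_divide[OF dN[of l] dN[of "{}"]] show ?thesis
    using assms(3) unfolding Zlam_def N0 by (simp add: Zbar_def Zl_def expect_BP_def field_simps)
qed

lemma Zbar_eq_away_from_A:
  assumes "finite V" "\<forall>e\<in>E. e \<subseteq> V \<and> card e = 2" "A \<subseteq> V"
    and "exc_contract V E D d Aten {} one_op \<mu> {} \<noteq> 0" "supp l \<inter> A = {}"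
  shows "Zbar V E D d Aten A X \<mu> l = Zl V E D d Aten \<mu> l * expect_BP V E D d Aten A X \<mu>"
proof -
  have "\<forall>e\<in>E. e \<inter> A \<noteq> {} \<longrightarrow> exc_mat D \<mu> F e = Pbp D \<mu> e" if "F = l \<or> F = {}" for F
    using that assms(5) by (auto simp: exc_mat_def supp_def)
  then have "exc_contract V E D d Aten A X \<mu> l * exc_contract V E D d Aten {} one_op \<mu> {}
      = exc_contract V E D d Aten A X \<mu> {} * exc_contract V E D d Aten {} one_op \<mu> l"
    unfolding exc_contract_def using assms(1-3) by (intro contract_exchange_far_parts) auto
  then show ?thesis
    using assms(4) by (simp add: Zbar_def Zl_def expect_BP_def field_simps)
qed

lemma cl_weight_remove:
  assumes "l \<in># W"
  shows "cl_weight w W = w l ^ count W l * (\<Prod>l'\<in>set_mset W - {l}. w l' ^ count W l')"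
  using assms by (simp add: cl_weight_def prod.remove)

lemma cl_weight_has_field_derivative:
  assumes "\<And>l. l \<in># W \<Longrightarrow> ((\<lambda>x. w x l) has_field_derivative w' l) (at x0)"
  shows "((\<lambda>x. cl_weight (w x) W) has_field_derivative
           (\<Sum>l\<in>set_mset W. of_nat (count W l) * w' l * w x0 l ^ (count W l - 1)
              * (\<Prod>l'\<in>set_mset W - {l}. w x0 l' ^ count W l'))) (at x0)"
  unfolding cl_weight_def
  using has_field_derivative_prod[of "set_mset W" "\<lambda>l x. w x l ^ count W l", OF DERIV_power[OF assms]]
  by (simp add: mult.assoc)

lemma cluster_term_has_field_derivative_0:
  assumes "finite V" "\<forall>e\<in>E. e \<subseteq> V \<and> card e = 2" "A \<subseteq> V"
    and "exc_contract V E D d Aten {} one_op \<mu> {} \<noteq> 0"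
  shows "((\<lambda>lam. complex_of_real (ursell W) * cl_weight (Zlam V E D d Aten A X \<mu> lam) W)
          has_field_derivative
            complex_of_real (ursell W) *
              (\<Sum>l\<in>{l\<in>set_mset W. supp l \<inter> A \<noteq> {}}.
                 of_nat (count W l) *
                 (Zbar V E D d Aten A X \<mu> l * Zl V E D d Aten \<mu> l ^ (count W l - 1)
                    * (\<Prod>l'\<in>set_mset W - {l}. Zl V E D d Aten \<mu> l' ^ count W l')
                  - cl_weight (Zl V E D d Aten \<mu>) W * expect_BP V E D d Aten A X \<mu>))) (at 0)"
proof -
  let ?Z = "Zl V E D d Aten \<mu>" and ?r = "expect_BP V E D d Aten A X \<mu>"
  let ?rest = "\<lambda>l. \<Prod>l'\<in>set_mset W - {l}. ?Z l' ^ count W l'"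
  let ?f = "\<lambda>l. of_nat (count W l) * (Zbar V E D d Aten A X \<mu> l - ?Z l * ?r) * ?Z l ^ (count W l - 1)
      * ?rest l"
  let ?g = "\<lambda>l. of_nat (count W l) *
      (Zbar V E D d Aten A X \<mu> l * ?Z l ^ (count W l - 1) * ?rest l - cl_weight ?Z W * ?r)"
  have "((\<lambda>lam. cl_weight (Zlam V E D d Aten A X \<mu> lam) W) has_field_derivative
          (\<Sum>l\<in>set_mset W. ?f l)) (at 0)"
    using cl_weight_has_field_derivative[OF Zlam_has_field_derivative_0[OF assms(1,3,4)]]
    by (simp add: Zlam_0[OF assms(1,3)])
  moreover have "(\<Sum>l\<in>set_mset W. ?f l) = (\<Sum>l\<in>{l\<in>set_mset W. supp l \<inter> A \<noteq> {}}. ?f l)"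
    by (rule sum.mono_neutral_right) (auto simp: Zbar_eq_away_from_A[OF assms])
  moreover have "?f l = ?g l" if "l \<in># W" for l
  proof -
    obtain k where "count W l = Suc k"
      using \<open>l \<in># W\<close> by (metis count_greater_zero_iff not0_implies_Suc not_gr0)
    then show ?thesis
      using cl_weight_remove[OF that, of ?Z] by (simp add: algebra_simps)
  qed
  ultimately have "((\<lambda>lam. cl_weight (Zlam V E D d Aten A X \<mu> lam) W) has_field_derivative
          (\<Sum>l\<in>{l\<in>set_mset W. supp l \<inter> A \<noteq> {}}. ?g l)) (at 0)"
    by (metis (no_types, lifting) mem_Collect_eq sum.cong)
  then show ?thesis
    by (rule DERIV_cmult)
qed

section \<open>Differentiating the logarithmic expansion\<close>

lemma has_field_derivative_of_Ln_identity:
  fixes f g S :: "complex \<Rightarrow> complex"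
  assumes ident: "eventually (\<lambda>x. g x \<noteq> 0 \<and> Ln (f x) = Ln (g x) + S x) (nhds x0)"
    and Ln_f: "((\<lambda>x. Ln (f x)) has_field_derivative L) (at x0)"
    and S: "(S has_field_derivative S') (at x0)"
    and g: "(g has_field_derivative g') (at x0)"
  shows "g' = g x0 * (L - S')"
proof -
  have "((\<lambda>x. Ln (f x) - S x) has_field_derivative L - S') (at x0)"
    using Ln_f S by (rule DERIV_diff)
  moreover have "eventually (\<lambda>x. Ln (f x) - S x = Ln (g x)) (nhds x0)"
    using ident by (rule eventually_mono) simp
  ultimately have "((\<lambda>x. Ln (g x)) has_field_derivative L - S') (at x0)"
    by (rule DERIV_cong_ev[OF refl _ refl, THEN iffD1, rotated])
  then have "((\<lambda>x. exp (Ln (g x))) has_field_derivative exp (Ln (g x0)) * (L - S')) (at x0)"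
    by (rule DERIV_chain2[OF DERIV_exp])
  moreover have "eventually (\<lambda>x. exp (Ln (g x)) = g x) (nhds x0)"
    using ident by (rule eventually_mono) simp
  ultimately have "(g has_field_derivative exp (Ln (g x0)) * (L - S')) (at x0)"
    by (rule DERIV_cong_ev[OF refl _ refl, THEN iffD1, rotated])
  moreover have "g x0 \<noteq> 0"
    using eventually_nhds_x_imp_x[OF ident] by blast
  ultimately show ?thesis
    using DERIV_unique[OF g] by simp
qed

lemma has_sum_deriv_of_Ln_expansion:
  fixes Z Z0 :: "complex \<Rightarrow> complex" and t :: "'w \<Rightarrow> complex \<Rightarrow> complex"
  assumes expansion: "\<exists>\<epsilon>>0. \<forall>lam. cmod lam < \<epsilon> \<longrightarrow>
          Z0 lam \<noteq> 0 \<and> (\<lambda>W. t W lam) summable_on C \<and> Ln (Z lam) = Ln (Z0 lam) + (\<Sum>\<^sub>\<infinity>W\<in>C. t W lam)"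
    and termwise: "(\<forall>W\<in>C. t W field_differentiable (at 0))
       \<and> (\<lambda>W. deriv (t W) 0) summable_on C
       \<and> ((\<lambda>lam. \<Sum>\<^sub>\<infinity>W\<in>C. t W lam) has_field_derivative (\<Sum>\<^sub>\<infinity>W\<in>C. deriv (t W) 0)) (at 0)"
    and Ln_Z: "((\<lambda>lam. Ln (Z lam)) has_field_derivative L) (at 0)"
    and Z0: "(Z0 has_field_derivative Z0') (at 0)"
  shows "((\<lambda>W. deriv (t W) 0) has_sum (L - Z0' / Z0 0)) C"
proof -
  obtain \<epsilon> where "\<epsilon> > 0" and near_0: "\<And>lam. cmod lam < \<epsilon> \<Longrightarrow>
      Z0 lam \<noteq> 0 \<and> Ln (Z lam) = Ln (Z0 lam) + (\<Sum>\<^sub>\<infinity>W\<in>C. t W lam)"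
    using expansion by blast
  have "eventually (\<lambda>lam. cmod lam < \<epsilon>) (nhds (0::complex))"
    using \<open>\<epsilon> > 0\<close> by (auto simp: eventually_nhds_metric dist_norm)
  then have "eventually (\<lambda>lam. Z0 lam \<noteq> 0 \<and> Ln (Z lam) = Ln (Z0 lam) + (\<Sum>\<^sub>\<infinity>W\<in>C. t W lam)) (nhds 0)"
    by (rule eventually_mono) (rule near_0)
  from has_field_derivative_of_Ln_identity[OF this Ln_Z _ Z0]
  have "Z0' = Z0 0 * (L - (\<Sum>\<^sub>\<infinity>W\<in>C. deriv (t W) 0))"
    using termwise by blast
  moreover have "Z0 0 \<noteq> 0"
    using near_0[of 0] \<open>\<epsilon> > 0\<close> by simp
  ultimately have "(\<Sum>\<^sub>\<infinity>W\<in>C. deriv (t W) 0) = L - Z0' / Z0 0"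
    by (simp add: field_simps)
  then show ?thesis
    using termwise has_sum_infsum by metis
qed

theorem mainTheorem6:
  fixes V :: "'v::linorder set" and E :: "'v set set"
    and D :: "'v set \<Rightarrow> nat" and d :: "'v \<Rightarrow> nat"
    and Aten :: "'v \<Rightarrow> nat \<Rightarrow> ('v set \<Rightarrow> nat) \<Rightarrow> complex"
    and A :: "'v set"
    and Op :: "('v \<Rightarrow> nat) \<Rightarrow> ('v \<Rightarrow> nat) \<Rightarrow> complex"
    and \<mu> :: "'v \<Rightarrow> 'v \<Rightarrow> nat \<times> nat \<Rightarrow> complex"
  assumes finV: "finite V"
    and graph: "\<forall>e\<in>E. e \<subseteq> V \<and> card e = 2"
    and AV: "A \<subseteq> V"
    and Znz: "contract V E D d Aten {} one_op ident_mat \<noteq> 0"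
    and BP: "BP_fixed_point V E D d Aten \<mu>"
    and Inz: "\<forall>v w. {v, w} \<in> E \<longrightarrow> Istar D \<mu> v w \<noteq> 0"
    and ZBPnz: "exc_contract V E D d Aten {} one_op \<mu> {} \<noteq> 0"
    and expansion: "\<exists>\<epsilon>>0. \<forall>lam. cmod lam < \<epsilon> \<longrightarrow>
          exc_contract V E D d Aten A (op_exp A d lam Op) \<mu> {} \<noteq> 0
        \<and> (\<lambda>W. complex_of_real (ursell W) * cl_weight (Zlam V E D d Aten A Op \<mu> lam) W)
             summable_on conn_clusters E A
        \<and> Ln (contract V E D d Aten A (op_exp A d lam Op) ident_mat)
            = Ln (exc_contract V E D d Aten A (op_exp A d lam Op) \<mu> {})
              + (\<Sum>\<^sub>\<infinity>W\<in>conn_clusters E A.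
                   complex_of_real (ursell W) * cl_weight (Zlam V E D d Aten A Op \<mu> lam) W)"
    and termwise:
      "(\<forall>W\<in>conn_clusters E A.
          (\<lambda>lam. complex_of_real (ursell W) * cl_weight (Zlam V E D d Aten A Op \<mu> lam) W)
            field_differentiable (at 0))
     \<and> (\<lambda>W. deriv (\<lambda>lam. complex_of_real (ursell W) * cl_weight (Zlam V E D d Aten A Op \<mu> lam) W) 0)
          summable_on conn_clusters E A
     \<and> ((\<lambda>lam. \<Sum>\<^sub>\<infinity>W\<in>conn_clusters E A.
             complex_of_real (ursell W) * cl_weight (Zlam V E D d Aten A Op \<mu> lam) W)
          has_field_derivative
          (\<Sum>\<^sub>\<infinity>W\<in>conn_clusters E A.
             deriv (\<lambda>lam. complex_of_real (ursell W) * cl_weight (Zlam V E D d Aten A Op \<mu> lam) W) 0))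
         (at 0)"
  shows "((\<lambda>lam. Ln (contract V E D d Aten A (op_exp A d lam Op) ident_mat))
            has_field_derivative
            (contract V E D d Aten A Op ident_mat / contract V E D d Aten {} one_op ident_mat))
           (at 0)
       \<and> ((\<lambda>W. complex_of_real (ursell W) *
               (\<Sum>l\<in>{l\<in>set_mset W. supp l \<inter> A \<noteq> {}}.
                  of_nat (count W l) *
                  (Zbar V E D d Aten A Op \<mu> l * Zl V E D d Aten \<mu> l ^ (count W l - 1)
                     * (\<Prod>l'\<in>set_mset W - {l}. Zl V E D d Aten \<mu> l' ^ count W l')
                   - cl_weight (Zl V E D d Aten \<mu>) W
                     * (exc_contract V E D d Aten A Op \<mu> {} / exc_contract V E D d Aten {} one_op \<mu> {}))))
          has_sum
            (contract V E D d Aten A Op ident_mat / contract V E D d Aten {} one_op ident_mat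
             - exc_contract V E D d Aten A Op \<mu> {} / exc_contract V E D d Aten {} one_op \<mu> {}))
          {W\<in>conn_clusters E A. cl_supp W \<inter> A \<noteq> {}}"
proof -
  let ?C = "conn_clusters E A"
  let ?term = "\<lambda>W lam. complex_of_real (ursell W) * cl_weight (Zlam V E D d Aten A Op \<mu> lam) W"
  note deriv_term = cluster_term_has_field_derivative_0[OF finV graph AV ZBPnz, THEN DERIV_imp_deriv]
  have dLn: "((\<lambda>lam. Ln (contract V E D d Aten A (op_exp A d lam Op) ident_mat)) has_field_derivative
      contract V E D d Aten A Op ident_mat / contract V E D d Aten {} one_op ident_mat) (at 0)"
    by (rule Ln_contract_op_exp_has_field_derivative_0[OF finV AV Znz])
  have dBP: "((\<lambda>lam. exc_contract V E D d Aten A (op_exp A d lam Op) \<mu> {}) has_field_derivative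
      exc_contract V E D d Aten A Op \<mu> {}) (at 0)"
    unfolding exc_contract_def by (rule contract_op_exp_has_field_derivative_0[OF finV AV])
  have BP_0: "exc_contract V E D d Aten A (op_exp A d 0 Op) \<mu> {} = exc_contract V E D d Aten {} one_op \<mu> {}"
    unfolding exc_contract_def by (rule contract_op_exp_0[OF finV AV])
  let ?val = "contract V E D d Aten A Op ident_mat / contract V E D d Aten {} one_op ident_mat
       - exc_contract V E D d Aten A Op \<mu> {} / exc_contract V E D d Aten {} one_op \<mu> {}"
  have "((\<lambda>W. deriv (?term W) 0) has_sum ?val) ?C"
    using has_sum_deriv_of_Ln_expansion[OF expansion termwise dLn dBP] unfolding BP_0 .
  moreover have "deriv (?term W) 0 = 0" if "cl_supp W \<inter> A = {}" for W
  proof -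
    have no_loop_at_A: "{l\<in>set_mset W. supp l \<inter> A \<noteq> {}} = {}"
      using that by (auto simp: cl_supp_def)
    show ?thesis
      unfolding deriv_term no_loop_at_A by simp
  qed
  ultimately have "((\<lambda>W. deriv (?term W) 0) has_sum ?val) {W\<in>?C. cl_supp W \<inter> A \<noteq> {}}"
    by (subst has_sum_cong_neutral[where T = ?C]) auto
  with dLn show ?thesis
    unfolding deriv_term expect_BP_def by blast
qed

end
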